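(* Let $\alpha_s=(1+\rho)/\rho$ and for $x^n\in\{0,1\}^n$ let $\ell_s(x^n)=\lceil-\log_2(\alpha_s p(x^n))\rceil+1$. Define the Shannon–Fano–Elias–Gray (SFEG) code $\phi_{\mathrm{SFEG}}:\{0,1\}^n\to\{0,1\}^*$ by letting $\phi_{\mathrm{SFEG}}(x^n)$ be the binary string of length $\ell_s(x^n)$ consisting of the first $\ell_s(x^n)$ bits of the binary expansion of $F(x^n-1)+p(x^n)/2$, where $F$ is the cumulative distribution function under Gray order. Then (a) $\phi_{\mathrm{SFEG}}$ is uniquely decodable, i.e. the map $(x^n_{(1)},\dots,x^n_{(k)})\mapsto\phi_{\mathrm{SFEG}}(x^n_{(1)})\cdots\phi_{\mathrm{SFEG}}(x^n_{(k)})$ (concatenation), taken over all $k\ge 1$ and all $k$-tuples of sequences in $\{0,1\}^n$, is injective; and (b) for $X^n$ i.i.d. with distribution $p$, $$\mathbb{E}\big[|\phi_{\mathrm{SFEG}}(X^n)|\big]<nH(X)+2-\log_2\frac{1+\rho}{\rho},$$ where $|u|$ is the length of a string $u$ and $H(X)=-p(0)\log_2p(0)-p(1)\log_2p(1)$.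
   Context: Let $p$ be a probability distribution on $\{0,1\}$ with $p(0),p(1)\in(0,1)$ and $p(0)\ne p(1)$, and set $\rho=\max\{p(0)/p(1),p(1)/p(0)\}\in(1,\infty)$. For $x^n=(x_1,\dots,x_n)\in\{0,1\}^n$, $p(x^n)=\prod_{i=1}^n p(x_i)$. Gray code is the bijection $g:\{0,1\}^n\to\{0,1\}^n$, $g(x^n)=x^n\oplus(0,x_1,\dots,x_{n-1})$ (bitwise XOR of $x^n$ with its one-bit right shift). Gray order $\preceq_G$ on $\{0,1\}^n$ is defined by $x^n\preceq_G y^n$ iff $g^{-1}(x^n)\preceq_L g^{-1}(y^n)$, where $\preceq_L$ is the lexicographic order. For $x^n$ not the largest element, $x^n+1$ denotes its immediate successor in Gray order; for $x^n$ not the smallest element, $x^n-1$ denotes its immediate predecessor. The cumulative distribution function is $F(x^n)=\sum_{a^n\preceq_G x^n}p(a^n)$, with the convention $F(x^n-1):=0$ when $x^n$ is the smallest element in Gray order. Logarithms are base 2. *)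

theory Defs
  imports Complex_Main
begin

text \<open>Binary sequences x^n in {0,1}^n are bool lists of length n (False = 0, True = 1).\<close>

definition gray :: "bool list \<Rightarrow> bool list" where
  "gray xs = map2 (\<noteq>) xs (False # butlast xs)"

definition gray_inv :: "nat \<Rightarrow> bool list \<Rightarrow> bool list" where
  "gray_inv n x = the_inv_into {xs. length xs = n} gray x"

definition lex_le :: "bool list \<Rightarrow> bool list \<Rightarrow> bool" where
  "lex_le xs ys \<longleftrightarrow> xs = ys \<or> (xs, ys) \<in> lexord {(a, b). a = False \<and> b = True}"

definition gray_le :: "nat \<Rightarrow> bool list \<Rightarrow> bool list \<Rightarrow> bool" where
  "gray_le n x y \<longleftrightarrow> lex_le (gray_inv n x) (gray_inv n y)"

definition seqprob :: "(bool \<Rightarrow> real) \<Rightarrow> bool list \<Rightarrow> real" where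
  "seqprob p xs = prod_list (map p xs)"

definition cdf :: "(bool \<Rightarrow> real) \<Rightarrow> nat \<Rightarrow> bool list \<Rightarrow> real" where
  "cdf p n x = (\<Sum>a\<in>{a. length a = n \<and> gray_le n a x}. seqprob p a)"

definition has_gray_pred :: "nat \<Rightarrow> bool list \<Rightarrow> bool" where
  "has_gray_pred n x \<longleftrightarrow> (\<exists>y. length y = n \<and> gray_le n y x \<and> y \<noteq> x)"

definition gray_pred :: "nat \<Rightarrow> bool list \<Rightarrow> bool list" where
  "gray_pred n x = (THE y. length y = n \<and> gray_le n y x \<and> y \<noteq> x \<and>
      (\<forall>z. length z = n \<and> gray_le n z x \<and> z \<noteq> x \<longrightarrow> gray_le n z y))"

text \<open>F(x^n - 1), with the convention F(x^n - 1) = 0 for the Gray-smallest x^n.\<close>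
definition cdf_prev :: "(bool \<Rightarrow> real) \<Rightarrow> nat \<Rightarrow> bool list \<Rightarrow> real" where
  "cdf_prev p n x = (if has_gray_pred n x then cdf p n (gray_pred n x) else 0)"

definition rho :: "(bool \<Rightarrow> real) \<Rightarrow> real" where
  "rho p = max (p False / p True) (p True / p False)"

definition alpha_s :: "(bool \<Rightarrow> real) \<Rightarrow> real" where
  "alpha_s p = (1 + rho p) / rho p"

definition ell_s :: "(bool \<Rightarrow> real) \<Rightarrow> bool list \<Rightarrow> nat" where
  "ell_s p x = nat (\<lceil>- log 2 (alpha_s p * seqprob p x)\<rceil> + 1)"

text \<open>First l bits of the (standard, non-terminating-in-ones) binary expansion of v.\<close>
definition bin_digits :: "real \<Rightarrow> nat \<Rightarrow> bool list" where
  "bin_digits v l = map (\<lambda>i. odd \<lfloor>v * 2 ^ i\<rfloor>) [1..<l+1]"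

definition sfeg :: "(bool \<Rightarrow> real) \<Rightarrow> nat \<Rightarrow> bool list \<Rightarrow> bool list" where
  "sfeg p n x = bin_digits (cdf_prev p n x + seqprob p x / 2) (ell_s p x)"

definition uniquely_decodable :: "nat \<Rightarrow> (bool list \<Rightarrow> bool list) \<Rightarrow> bool" where
  "uniquely_decodable n c \<longleftrightarrow>
     (\<forall>xs ys. xs \<noteq> [] \<longrightarrow> ys \<noteq> [] \<longrightarrow> (\<forall>x\<in>set xs. length x = n) \<longrightarrow>
        (\<forall>y\<in>set ys. length y = n) \<longrightarrow> concat (map c xs) = concat (map c ys) \<longrightarrow> xs = ys)"

definition entropy2 :: "(bool \<Rightarrow> real) \<Rightarrow> real" where
  "entropy2 p = - p False * log 2 (p False) - p True * log 2 (p True)"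

end

theory Submission
  imports Defs "HOL-Library.Sublist"
begin

(* Words that are adjacent in Gray order differ in a single bit, so their probabilities differ
   by a factor of at most rho. Hence the point F(x - 1) + p(x)/2 of a word x lies at distance at
   least p(x)/2 + p(x)/(2 rho) = alpha p(x)/2 from the corresponding point of any other word,
   whereas two reals in [0,1) sharing their first l(x) binary digits are closer than
   2^-l(x) <= alpha p(x)/2. So no codeword is a prefix of another, and prefix codes are uniquely
   decodable. The length bound follows by averaging l(x) < 2 - log alpha - log p(x). *)

section \<open>Gray code and Gray order\<close>

fun gray_code :: "bool \<Rightarrow> bool list \<Rightarrow> bool list" where
  "gray_code c [] = []"
| "gray_code c (b # bs) = (b \<noteq> c) # gray_code b bs"

fun gray_decode :: "bool \<Rightarrow> bool list \<Rightarrow> bool list" where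
  "gray_decode c [] = []"
| "gray_decode c (d # ds) = (d \<noteq> c) # gray_decode (d \<noteq> c) ds"

lemma length_gray_decode [simp]: "length (gray_decode c xs) = length xs"
  by (induction xs arbitrary: c) auto

lemma gray_code_gray_decode [simp]: "gray_code c (gray_decode c xs) = xs"
  by (induction xs arbitrary: c) auto

lemma gray_decode_gray_code [simp]: "gray_decode c (gray_code c xs) = xs"
proof (induction xs arbitrary: c)
  case (Cons b xs)
  have "((b \<noteq> c) \<noteq> c) = b"
    by blast
  with Cons show ?case
    by simp
qed simp

lemma gray_code_append: "gray_code c (xs @ ys) = gray_code c xs @ gray_code (last (c # xs)) ys"
  by (induction xs arbitrary: c) auto

lemma gray_code_replicate: "gray_code c (replicate j c) = replicate j False"
  by (induction j) auto

lemma gray_eq_gray_code: "gray xs = gray_code False xs"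
proof -
  have "map2 (\<noteq>) xs (c # butlast xs) = gray_code c xs" for c
    by (induction xs arbitrary: c) (auto simp: neq_Nil_conv)
  then show ?thesis
    unfolding gray_def .
qed

lemma gray_inv_eq_gray_decode: "length x = n \<Longrightarrow> gray_inv n x = gray_decode False x"
  unfolding gray_inv_def
proof (rule the_inv_into_f_eq)
  show "inj_on gray {xs. length xs = n}"
    by (rule inj_onI) (metis gray_eq_gray_code gray_decode_gray_code)
qed (auto simp: gray_eq_gray_code)

fun bits_to_nat :: "bool list \<Rightarrow> nat" where
  "bits_to_nat [] = 0"
| "bits_to_nat (b # bs) = (if b then 2 ^ length bs else 0) + bits_to_nat bs"

lemma bits_to_nat_less: "bits_to_nat xs < 2 ^ length xs"
  by (induction xs) auto

lemma bits_to_nat_append: "bits_to_nat (xs @ ys) = bits_to_nat xs * 2 ^ length ys + bits_to_nat ys"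
  by (induction xs) (auto simp: power_add algebra_simps)

lemma bits_to_nat_replicate_False [simp]: "bits_to_nat (replicate j False) = 0"
  by (induction j) auto

lemma bits_to_nat_replicate_True: "bits_to_nat (replicate j True) = 2 ^ j - 1"
  by (induction j) (auto simp: Suc_leI)

lemma lexord_iff_bits_to_nat_less:
  "length xs = length ys \<Longrightarrow>
     (xs, ys) \<in> lexord {(False, True)} \<longleftrightarrow> bits_to_nat xs < bits_to_nat ys"
proof (induction xs arbitrary: ys)
  case (Cons a xs)
  then obtain b ys' where "ys = b # ys'" "length xs = length ys'"
    by (cases ys) auto
  with Cons.IH bits_to_nat_less[of xs] bits_to_nat_less[of ys'] show ?case
    by (cases a; cases b) auto
qed simp

lemma bits_to_nat_inject:
  "length xs = length ys \<Longrightarrow> bits_to_nat xs = bits_to_nat ys \<longleftrightarrow> xs = ys"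
proof (induction xs arbitrary: ys)
  case (Cons a xs)
  then obtain b ys' where "ys = b # ys'" "length xs = length ys'"
    by (cases ys) auto
  with Cons.IH bits_to_nat_less[of xs] bits_to_nat_less[of ys'] show ?case
    by (cases a; cases b) auto
qed simp

definition gray_rank :: "bool list \<Rightarrow> nat" where
  "gray_rank x = bits_to_nat (gray_decode False x)"

lemma gray_rank_less: "gray_rank x < 2 ^ length x"
  unfolding gray_rank_def using bits_to_nat_less by (metis length_gray_decode)

lemma gray_rank_inject:
  "length x = length y \<Longrightarrow> gray_rank x = gray_rank y \<longleftrightarrow> x = y"
  unfolding gray_rank_def by (metis bits_to_nat_inject gray_code_gray_decode length_gray_decode)

lemma gray_le_iff_gray_rank_le:
  "length x = n \<Longrightarrow> length y = n \<Longrightarrow> gray_le n x y \<longleftrightarrow> gray_rank x \<le> gray_rank y"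
proof -
  assume len: "length x = n" "length y = n"
  have "{(a, b). a = False \<and> b = True} = {(False, True)}"
    by auto
  with len have "gray_le n x y \<longleftrightarrow> gray_decode False x = gray_decode False y \<or> gray_rank x < gray_rank y"
    by (simp add: gray_le_def lex_le_def gray_inv_eq_gray_decode lexord_iff_bits_to_nat_less
        gray_rank_def)
  with len show ?thesis
    by (auto simp: le_less gray_rank_def bits_to_nat_inject)
qed

lemma finite_bool_lists_length: "finite {x :: bool list. length x = n}"
  using finite_lists_length_eq[of "UNIV :: bool set" n] by simp

lemma card_bool_lists_length: "card {x :: bool list. length x = n} = 2 ^ n"
  using card_lists_length_eq[of "UNIV :: bool set" n] by simp

lemma bij_betw_gray_rank: "bij_betw gray_rank {x. length x = n} {..<2 ^ n}"
proof -
  have inj: "inj_on gray_rank {x. length x = n}"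
    by (rule inj_onI) (simp add: gray_rank_inject)
  moreover have sub: "gray_rank ` {x. length x = n} \<subseteq> {..<2 ^ n}"
    using gray_rank_less by fastforce
  moreover have "card (gray_rank ` {x. length x = n}) = card {..<(2::nat) ^ n}"
    using card_image[OF inj] by (simp add: card_bool_lists_length)
  ultimately show ?thesis
    unfolding bij_betw_def by (simp add: card_subset_eq)
qed

definition gray_unrank :: "nat \<Rightarrow> nat \<Rightarrow> bool list" where
  "gray_unrank n = inv_into {x. length x = n} gray_rank"

lemma length_gray_unrank [simp]: "k < 2 ^ n \<Longrightarrow> length (gray_unrank n k) = n"
  using bij_betwE[OF bij_betw_inv_into[OF bij_betw_gray_rank]] unfolding gray_unrank_def by blast

lemma gray_rank_gray_unrank [simp]: "k < 2 ^ n \<Longrightarrow> gray_rank (gray_unrank n k) = k"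
  using bij_betw_inv_into_right[OF bij_betw_gray_rank] unfolding gray_unrank_def by blast

lemma gray_unrank_gray_rank [simp]: "length x = n \<Longrightarrow> gray_unrank n (gray_rank x) = x"
  using bij_betw_inv_into_left[OF bij_betw_gray_rank] unfolding gray_unrank_def by blast

lemma gray_less_iff_gray_rank_less:
  "length x = n \<Longrightarrow> length y = n \<Longrightarrow> gray_le n x y \<and> x \<noteq> y \<longleftrightarrow> gray_rank x < gray_rank y"
  by (metis gray_le_iff_gray_rank_le gray_rank_inject order_less_le)

lemma has_gray_pred_iff:
  assumes x: "length x = n"
  shows "has_gray_pred n x \<longleftrightarrow> 0 < gray_rank x"
proof
  assume "has_gray_pred n x"
  then show "0 < gray_rank x"
    using x gray_less_iff_gray_rank_less unfolding has_gray_pred_def by fastforce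
next
  assume "0 < gray_rank x"
  then have "gray_le n (gray_unrank n 0) x \<and> gray_unrank n 0 \<noteq> x"
    using x by (simp add: gray_less_iff_gray_rank_less)
  then show "has_gray_pred n x"
    unfolding has_gray_pred_def by (metis length_gray_unrank zero_less_power pos2)
qed

lemma gray_pred_eq_gray_unrank:
  assumes x: "length x = n" and pos: "0 < gray_rank x"
  shows "gray_pred n x = gray_unrank n (gray_rank x - 1)"
  unfolding gray_pred_def
proof (rule the_equality)
  let ?y = "gray_unrank n (gray_rank x - 1)"
  have "gray_rank x - 1 < 2 ^ n"
    using gray_rank_less[of x] x by (simp add: less_imp_diff_less)
  then have y: "length ?y = n" "gray_rank ?y = gray_rank x - 1"
    by simp_all
  have below: "length z = n \<and> gray_le n z x \<and> z \<noteq> x \<longleftrightarrow>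
      length z = n \<and> gray_rank z < gray_rank x" for z
    using x gray_less_iff_gray_rank_less by blast
  show "length ?y = n \<and> gray_le n ?y x \<and> ?y \<noteq> x \<and>
      (\<forall>z. length z = n \<and> gray_le n z x \<and> z \<noteq> x \<longrightarrow> gray_le n z ?y)"
    unfolding below using x y pos by (auto simp: gray_le_iff_gray_rank_le)
  fix z
  assume z: "length z = n \<and> gray_le n z x \<and> z \<noteq> x \<and>
      (\<forall>w. length w = n \<and> gray_le n w x \<and> w \<noteq> x \<longrightarrow> gray_le n w z)"
  then have "length z = n" "gray_rank z < gray_rank x"
    using below[of z] by blast+
  moreover have "gray_rank ?y \<le> gray_rank z"
    using z unfolding below using y pos by (auto simp: gray_le_iff_gray_rank_le)
  ultimately show "z = ?y"
    using y by (simp add: gray_rank_inject[symmetric])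
qed

definition gray_prob :: "(bool \<Rightarrow> real) \<Rightarrow> nat \<Rightarrow> nat \<Rightarrow> real" where
  "gray_prob p n k = seqprob p (gray_unrank n k)"

lemma cdf_eq_sum_gray_prob:
  assumes x: "length x = n"
  shows "cdf p n x = (\<Sum>k\<le>gray_rank x. gray_prob p n k)"
  unfolding cdf_def
proof (rule sum.reindex_bij_witness[of _ "gray_unrank n" gray_rank])
  show "gray_unrank n k \<in> {a. length a = n \<and> gray_le n a x}" if "k \<in> {..gray_rank x}" for k
  proof -
    have "k < 2 ^ n"
      using that gray_rank_less[of x] x by simp
    with that x show ?thesis
      by (simp add: gray_le_iff_gray_rank_le)
  qed
  show "gray_rank (gray_unrank n k) = k" if "k \<in> {..gray_rank x}" for k
    using that gray_rank_less[of x] x by simp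
qed (use x in \<open>auto simp: gray_prob_def gray_le_iff_gray_rank_le\<close>)

lemma cdf_prev_eq_sum_gray_prob:
  assumes x: "length x = n"
  shows "cdf_prev p n x = (\<Sum>k<gray_rank x. gray_prob p n k)"
proof (cases "gray_rank x = 0")
  case False
  then have "gray_rank x - 1 < 2 ^ n"
    using gray_rank_less[of x] x by (simp add: less_imp_diff_less)
  then have "cdf_prev p n x = (\<Sum>k\<le>gray_rank x - 1. gray_prob p n k)"
    using False x by (simp add: cdf_prev_def has_gray_pred_iff gray_pred_eq_gray_unrank
        cdf_eq_sum_gray_prob)
  also have "{..gray_rank x - 1} = {..<gray_rank x}"
    using False by auto
  finally show ?thesis .
qed (use x in \<open>simp add: cdf_prev_def has_gray_pred_iff\<close>)

section \<open>Adjacent words in Gray order\<close>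

lemma append_False_replicate_True:
  "False \<in> set xs \<Longrightarrow> \<exists>t j. xs = t @ False # replicate j True"
proof (induction xs rule: rev_induct)
  case (snoc b xs)
  show ?case
  proof (cases b)
    case True
    with snoc obtain t j where "xs = t @ False # replicate j True"
      by auto
    with True have "xs @ [b] = t @ False # replicate (Suc j) True"
      by (simp add: replicate_append_same)
    then show ?thesis
      by blast
  qed (intro exI[of _ xs] exI[of _ 0], simp)
qed simp

lemma gray_code_successor_flips_one_bit:
  assumes len: "length b = length a" and succ: "bits_to_nat b = Suc (bits_to_nat a)"
  shows "\<exists>u c v. gray_code False a = u @ c # v \<and> gray_code False b = u @ (\<not> c) # v"
proof -
  have "False \<in> set a"
  proof (rule ccontr)
    assume "False \<notin> set a"
    then have "a = replicate (length a) True"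
      by (induction a) auto
    then have "bits_to_nat a = 2 ^ length a - 1"
      by (metis bits_to_nat_replicate_True)
    then show False
      using succ len bits_to_nat_less[of b] by simp
  qed
  then obtain t j where a: "a = t @ False # replicate j True"
    using append_False_replicate_True by blast
  have "bits_to_nat (t @ True # replicate j False) = Suc (bits_to_nat a)"
    unfolding a bits_to_nat_append by (simp add: bits_to_nat_replicate_True)
  with succ len have b: "b = t @ True # replicate j False"
    by (simp add: a bits_to_nat_inject[symmetric])
  have "gray_code False (replicate j True) = gray_code True (replicate j False)"
    by (cases j) (simp_all add: gray_code_replicate)
  then show ?thesis
    unfolding a b gray_code_append
    by (intro exI[of _ "gray_code False t"] exI[of _ "last (False # t)"]
        exI[of _ "gray_code True (replicate j False)"]) auto
qed

lemma gray_unrank_Suc_flips_one_bit: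
  assumes "Suc k < 2 ^ n"
  shows "\<exists>u c v. gray_unrank n k = u @ c # v \<and> gray_unrank n (Suc k) = u @ (\<not> c) # v"
proof -
  let ?a = "gray_decode False (gray_unrank n k)" and ?b = "gray_decode False (gray_unrank n (Suc k))"
  have "length ?b = length ?a" "bits_to_nat ?b = Suc (bits_to_nat ?a)"
    using assms gray_rank_gray_unrank[of k n] gray_rank_gray_unrank[of "Suc k" n]
    by (simp_all add: gray_rank_def)
  from gray_code_successor_flips_one_bit[OF this] show ?thesis
    by simp
qed

section \<open>Probabilities of binary words\<close>

lemma seqprob_Nil [simp]: "seqprob p [] = 1"
  and seqprob_Cons [simp]: "seqprob p (b # xs) = p b * seqprob p xs"
  and seqprob_append: "seqprob p (xs @ ys) = seqprob p xs * seqprob p ys"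
  by (simp_all add: seqprob_def)

lemma seqprob_pos: "(\<And>b. 0 < p b) \<Longrightarrow> 0 < seqprob p xs"
  by (induction xs) simp_all

lemma seqprob_le_1: "(\<And>b. 0 < p b) \<Longrightarrow> (\<And>b. p b \<le> 1) \<Longrightarrow> seqprob p xs \<le> 1"
  by (induction xs) (simp_all add: mult_le_one seqprob_pos less_imp_le)

lemma seqprob_flip_bit_le:
  assumes "\<And>b. 0 < p b"
  shows "seqprob p (u @ c # v) \<le> rho p * seqprob p (u @ (\<not> c) # v)"
proof -
  have "p c / p (\<not> c) \<le> rho p"
    unfolding rho_def by (cases c) auto
  then have "p c \<le> rho p * p (\<not> c)"
    using assms[of "\<not> c"] by (simp add: divide_le_eq)
  moreover have "0 \<le> seqprob p u * seqprob p v"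
    by (simp add: assms seqprob_pos less_imp_le)
  ultimately have "p c * (seqprob p u * seqprob p v) \<le> rho p * p (\<not> c) * (seqprob p u * seqprob p v)"
    by (rule mult_right_mono)
  then show ?thesis
    by (simp add: seqprob_append algebra_simps)
qed

lemma sum_lists_length_Suc:
  "(\<Sum>x\<in>{x. length x = Suc n}. f x) = (\<Sum>x\<in>{x. length x = n}. f (True # x) + f (False # x))"
proof -
  have "{x. length x = Suc n} = Cons True ` {x. length x = n} \<union> Cons False ` {x. length x = n}"
    by (auto simp: length_Suc_conv)
  moreover have "Cons True ` {x. length x = n} \<inter> Cons False ` {x. length x = n} = {}"
    by auto
  ultimately show ?thesis
    by (simp add: sum.union_disjoint finite_bool_lists_length sum.reindex sum.distrib)
qed

lemma sum_seqprob_lists_length: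
  "(\<Sum>x\<in>{x. length x = n}. seqprob p x) = (p False + p True) ^ n"
  by (induction n) (simp_all add: sum_lists_length_Suc sum.distrib sum_distrib_left[symmetric]
      algebra_simps)

lemma sum_seqprob_log_lists_length:
  assumes pos: "\<And>b. 0 < p b" and sum1: "p False + p True = 1"
  shows "(\<Sum>x\<in>{x. length x = n}. seqprob p x * log 2 (seqprob p x)) = - real n * entropy2 p"
proof (induction n)
  case (Suc n)
  let ?f = "\<lambda>x. seqprob p x * log 2 (seqprob p x)"
  have Cons: "?f (b # x) = p b * log 2 (p b) * seqprob p x + p b * ?f x" for b x
    using pos[of b] seqprob_pos[of p x] pos by (simp add: log_mult algebra_simps)
  have "(\<Sum>x\<in>{x. length x = Suc n}. ?f x)
      = (\<Sum>x\<in>{x. length x = n}. - entropy2 p * seqprob p x + (p False + p True) * ?f x)"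
    unfolding sum_lists_length_Suc Cons by (simp add: entropy2_def algebra_simps)
  also have "\<dots> = - entropy2 p * (\<Sum>x\<in>{x. length x = n}. seqprob p x)
      + (p False + p True) * (\<Sum>x\<in>{x. length x = n}. ?f x)"
    by (simp only: sum.distrib sum_distrib_left)
  also have "\<dots> = - real (Suc n) * entropy2 p"
    using sum1 Suc by (simp add: sum_seqprob_lists_length algebra_simps)
  finally show ?case .
qed simp

definition midpoint :: "(nat \<Rightarrow> real) \<Rightarrow> nat \<Rightarrow> real" where
  "midpoint q k = (\<Sum>j<k. q j) + q k / 2"

lemma midpoint_Suc: "midpoint q (Suc k) - midpoint q k = q k / 2 + q (Suc k) / 2"
  by (simp add: midpoint_def)

lemma midpoint_mono:
  assumes "\<And>k. 0 \<le> q k" and "i \<le> j"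
  shows "midpoint q i \<le> midpoint q j"
proof -
  have "midpoint q k \<le> midpoint q (Suc k)" for k
    using midpoint_Suc[of q k] assms(1)[of k] assms(1)[of "Suc k"] by linarith
  then have "incseq (midpoint q)"
    by (rule incseq_SucI)
  then show ?thesis
    using assms(2) by (rule incseqD)
qed

lemma midpoint_gap:
  assumes nonneg: "\<And>k. 0 \<le> q k" and r: "0 < r"
    and ratio: "\<And>k. Suc k < N \<Longrightarrow> q k \<le> r * q (Suc k) \<and> q (Suc k) \<le> r * q k"
    and ij: "i < j" "j < N"
  shows "(1 + r) / r * q i / 2 \<le> midpoint q j - midpoint q i"
    and "(1 + r) / r * q j / 2 \<le> midpoint q j - midpoint q i"
proof -
  have split: "(1 + r) / r * x / 2 = x / 2 + x / r / 2" for x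
    using r by (simp add: field_simps)
  have "q i / r / 2 \<le> q (Suc i) / 2"
    using ratio[of i] ij r by (simp add: divide_le_eq mult.commute)
  moreover have "midpoint q (Suc i) \<le> midpoint q j"
    using ij by (intro midpoint_mono nonneg) simp
  ultimately show "(1 + r) / r * q i / 2 \<le> midpoint q j - midpoint q i"
    unfolding split using midpoint_Suc[of q i] by linarith
  obtain j' where j': "j = Suc j'"
    using ij by (cases j) auto
  have "q (Suc j') / r / 2 \<le> q j' / 2"
    using ratio[of j'] ij r j' by (simp add: divide_le_eq mult.commute)
  moreover have "midpoint q i \<le> midpoint q j'"
    using ij j' by (intro midpoint_mono nonneg) simp
  ultimately show "(1 + r) / r * q j / 2 \<le> midpoint q j - midpoint q i"
    unfolding split j' using midpoint_Suc[of q j'] by linarith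
qed

section \<open>Binary expansions and prefix codes\<close>

lemma length_bin_digits [simp]: "length (bin_digits v l) = l"
  by (simp add: bin_digits_def)

lemma take_bin_digits: "l \<le> l' \<Longrightarrow> take l (bin_digits v l') = bin_digits v l"
  unfolding bin_digits_def take_map by (subst take_upt) auto

lemma floor_double_cases: "\<lfloor>2 * y\<rfloor> = 2 * \<lfloor>y\<rfloor> \<or> \<lfloor>2 * y\<rfloor> = 2 * \<lfloor>y\<rfloor> + 1" for y :: real
proof -
  have "2 * \<lfloor>y\<rfloor> \<le> \<lfloor>2 * y\<rfloor>" "\<lfloor>2 * y\<rfloor> < 2 * \<lfloor>y\<rfloor> + 2"
    by (simp_all add: le_floor_iff floor_less_iff) linarith
  then show ?thesis
    by linarith
qed

lemma floor_scaled_eq_if_bin_digits_eq: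
  assumes "\<lfloor>v\<rfloor> = \<lfloor>u\<rfloor>" and "bin_digits v l = bin_digits u l"
  shows "\<lfloor>v * 2 ^ l\<rfloor> = \<lfloor>u * 2 ^ l\<rfloor>"
  using assms(2)
proof (induction l)
  case (Suc l)
  have snoc: "bin_digits w (Suc l) = bin_digits w l @ [odd \<lfloor>2 * (w * 2 ^ l)\<rfloor>]" for w
    by (simp add: bin_digits_def mult_ac)
  have "\<lfloor>v * 2 ^ l\<rfloor> = \<lfloor>u * 2 ^ l\<rfloor>" and "odd \<lfloor>2 * (v * 2 ^ l)\<rfloor> \<longleftrightarrow> odd \<lfloor>2 * (u * 2 ^ l)\<rfloor>"
    using Suc unfolding snoc by simp_all
  then have "\<lfloor>2 * (v * 2 ^ l)\<rfloor> = \<lfloor>2 * (u * 2 ^ l)\<rfloor>"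
    using floor_double_cases[of "v * 2 ^ l"] floor_double_cases[of "u * 2 ^ l"] by (elim disjE) auto
  then show ?case
    by (simp add: mult_ac)
qed (use assms(1) in simp)

lemma dist_less_if_bin_digits_eq:
  assumes "0 \<le> v" "v < 1" "0 \<le> u" "u < 1" and "bin_digits v l = bin_digits u l"
  shows "\<bar>v - u\<bar> * 2 ^ l < 1"
proof -
  have "\<lfloor>v\<rfloor> = 0" "\<lfloor>u\<rfloor> = 0"
    using assms(1-4) by (simp_all add: floor_eq_iff)
  then have "\<lfloor>v\<rfloor> = \<lfloor>u\<rfloor>"
    by simp
  then have "\<lfloor>v * 2 ^ l\<rfloor> = \<lfloor>u * 2 ^ l\<rfloor>"
    using assms(5) by (rule floor_scaled_eq_if_bin_digits_eq)
  then have "\<bar>v * 2 ^ l - u * 2 ^ l\<bar> < 1"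
    by linarith
  then show ?thesis
    by (simp add: abs_mult flip: left_diff_distrib)
qed

lemma inverse_le_power_ceiling_log:
  assumes "0 < a"
  shows "2 / a \<le> (2::real) ^ nat (\<lceil>- log 2 a\<rceil> + 1)"
proof -
  have "2 / a = 2 powr (1 - log 2 a)"
    using assms by (simp add: powr_diff)
  also have "\<dots> \<le> 2 powr real (nat (\<lceil>- log 2 a\<rceil> + 1))"
    by (intro powr_mono) linarith+
  finally show ?thesis
    by (simp add: powr_realpow)
qed

lemma inj_on_concat_map_if_prefix_free:
  assumes nonempty: "\<forall>x\<in>A. c x \<noteq> []"
    and prefix_free: "\<forall>x\<in>A. \<forall>y\<in>A. prefix (c x) (c y) \<longrightarrow> x = y"
  shows "inj_on (\<lambda>xs. concat (map c xs)) (lists A)"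
proof (rule inj_onI)
  fix xs ys
  assume "xs \<in> lists A" "ys \<in> lists A" "concat (map c xs) = concat (map c ys)"
  then show "xs = ys"
  proof (induction xs arbitrary: ys)
    case Nil
    then show ?case
      using nonempty by (cases ys) auto
  next
    case (Cons x xs)
    then obtain y ys' where ys: "ys = y # ys'"
      using nonempty by (cases ys) auto
    with Cons.prems have eq: "c x @ concat (map c xs) = c y @ concat (map c ys')"
      by simp
    then have "prefix (c x) (c y) \<or> prefix (c y) (c x)"
      by (metis prefixI prefix_same_cases)
    moreover have "x \<in> A" "y \<in> A"
      using Cons.hyps Cons.prems ys by auto
    ultimately have "x = y"
      using prefix_free by auto
    with eq Cons.IH Cons.prems ys show ?case
      by simp
  qed
qed

lemma uniquely_decodable_if_prefix_free:
  assumes "\<forall>x\<in>{x. length x = n}. c x \<noteq> []"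
    and "\<forall>x\<in>{x. length x = n}. \<forall>y\<in>{x. length x = n}. prefix (c x) (c y) \<longrightarrow> x = y"
  shows "uniquely_decodable n c"
  unfolding uniquely_decodable_def
  using inj_on_concat_map_if_prefix_free[OF assms] by (auto dest: inj_onD)

section \<open>The Shannon--Fano--Elias--Gray code\<close>

locale binary_source =
  fixes p :: "bool \<Rightarrow> real"
  assumes pos: "0 < p b"
    and sum_eq_1: "p False + p True = 1"
    and nonuniform: "p False \<noteq> p True"
    \<comment> \<open>it forces rho > 1, hence alpha < 2 and nonempty codewords; for n = 0 and rho = 1
      the only codeword would be empty\<close>
begin

lemma rho_gt_1: "1 < rho p"
  using pos[of False] pos[of True] nonuniform
  unfolding rho_def by (cases "p False < p True") (simp_all add: less_max_iff_disj)

lemma alpha_s_bounds: "1 < alpha_s p" "alpha_s p < 2"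
  using rho_gt_1 unfolding alpha_s_def by (simp_all add: field_simps)

lemma seqprob_bounds: "0 < seqprob p x" "seqprob p x \<le> 1"
proof -
  have "p b \<le> 1" for b
    using sum_eq_1 pos[of False] pos[of True] by (cases b) simp_all
  then show "0 < seqprob p x" "seqprob p x \<le> 1"
    by (simp_all add: pos seqprob_pos seqprob_le_1)
qed

lemma alpha_seqprob_bounds: "0 < alpha_s p * seqprob p x" "alpha_s p * seqprob p x < 2"
proof -
  show "0 < alpha_s p * seqprob p x"
    using alpha_s_bounds seqprob_bounds by simp
  have "alpha_s p * seqprob p x \<le> alpha_s p"
    using alpha_s_bounds seqprob_bounds[of x] by (simp add: mult_left_le)
  then show "alpha_s p * seqprob p x < 2"
    using alpha_s_bounds by linarith
qed

lemma ell_s_eq: "real (ell_s p x) = real_of_int \<lceil>- log 2 (alpha_s p * seqprob p x)\<rceil> + 1"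
  and ell_s_pos: "0 < ell_s p x"
proof -
  have "log 2 (alpha_s p * seqprob p x) < 1"
    using alpha_seqprob_bounds[of x] by (simp add: log_less_iff)
  then have "0 \<le> \<lceil>- log 2 (alpha_s p * seqprob p x)\<rceil>"
    by simp
  then show "real (ell_s p x) = real_of_int \<lceil>- log 2 (alpha_s p * seqprob p x)\<rceil> + 1"
    and "0 < ell_s p x"
    unfolding ell_s_def by simp_all
qed

lemma length_sfeg [simp]: "length (sfeg p n x) = ell_s p x"
  by (simp add: sfeg_def)

abbreviation gray_midpoint :: "nat \<Rightarrow> nat \<Rightarrow> real" where
  "gray_midpoint n \<equiv> midpoint (gray_prob p n)"

lemma sfeg_eq_bin_digits_gray_midpoint:
  "length x = n \<Longrightarrow> sfeg p n x = bin_digits (gray_midpoint n (gray_rank x)) (ell_s p x)"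
  by (simp add: sfeg_def midpoint_def cdf_prev_eq_sum_gray_prob gray_prob_def)

lemma gray_midpoint_bounds:
  assumes "k < 2 ^ n"
  shows "0 \<le> gray_midpoint n k" "gray_midpoint n k < 1"
proof -
  have pos: "0 < gray_prob p n j" for j
    by (simp add: gray_prob_def seqprob_bounds)
  then show "0 \<le> gray_midpoint n k"
    by (simp add: midpoint_def sum_nonneg less_imp_le)
  have "gray_midpoint n k < (\<Sum>j<Suc k. gray_prob p n j)"
    using pos[of k] by (simp add: midpoint_def)
  also have "\<dots> \<le> (\<Sum>j<2 ^ n. gray_prob p n j)"
    using assms pos by (intro sum_mono2) (auto intro: less_imp_le)
  also have "\<dots> = (\<Sum>x\<in>{x. length x = n}. seqprob p x)"
    unfolding gray_prob_def
    by (rule sum.reindex_bij_betw[OF bij_betw_inv_into[OF bij_betw_gray_rank], folded gray_unrank_def])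
  also have "\<dots> = 1"
    by (simp add: sum_seqprob_lists_length sum_eq_1)
  finally show "gray_midpoint n k < 1" .
qed

lemma gray_prob_Suc_ratio:
  assumes "Suc k < 2 ^ n"
  shows "gray_prob p n k \<le> rho p * gray_prob p n (Suc k)"
    and "gray_prob p n (Suc k) \<le> rho p * gray_prob p n k"
proof -
  obtain u c v where "gray_unrank n k = u @ c # v" "gray_unrank n (Suc k) = u @ (\<not> c) # v"
    using gray_unrank_Suc_flips_one_bit[OF assms] by blast
  then show "gray_prob p n k \<le> rho p * gray_prob p n (Suc k)"
    and "gray_prob p n (Suc k) \<le> rho p * gray_prob p n k"
    unfolding gray_prob_def
    using seqprob_flip_bit_le[of p u c v] seqprob_flip_bit_le[of p u "\<not> c" v] pos by simp_all
qed

lemma gray_midpoint_gap: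
  assumes x: "length x = n" and y: "length y = n" and "x \<noteq> y"
  shows "alpha_s p * seqprob p x / 2
    \<le> \<bar>gray_midpoint n (gray_rank y) - gray_midpoint n (gray_rank x)\<bar>"
proof -
  have nonneg: "0 \<le> gray_prob p n k" for k
    by (simp add: gray_prob_def seqprob_bounds less_imp_le)
  have ratio: "gray_prob p n k \<le> rho p * gray_prob p n (Suc k) \<and>
      gray_prob p n (Suc k) \<le> rho p * gray_prob p n k" if "Suc k < 2 ^ n" for k
    using gray_prob_Suc_ratio[OF that] by blast
  have gap: "alpha_s p * gray_prob p n i / 2 \<le> gray_midpoint n j - gray_midpoint n i \<and>
      alpha_s p * gray_prob p n j / 2 \<le> gray_midpoint n j - gray_midpoint n i"
    if "i < j" "j < 2 ^ n" for i j
    unfolding alpha_s_def using midpoint_gap[of "gray_prob p n" "rho p" "2 ^ n" i j] that rho_gt_1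
      nonneg ratio by simp
  have "gray_rank x < 2 ^ n" "gray_rank y < 2 ^ n" "gray_rank x \<noteq> gray_rank y"
    using assms gray_rank_less[of x] gray_rank_less[of y] gray_rank_inject[of x y] by auto
  moreover have "seqprob p x = gray_prob p n (gray_rank x)"
    using x by (simp add: gray_prob_def)
  ultimately show ?thesis
    using gap[of "gray_rank x" "gray_rank y"] gap[of "gray_rank y" "gray_rank x"]
    by (cases "gray_rank x < gray_rank y") (auto simp: abs_if)
qed

lemma sfeg_prefix_free:
  assumes x: "length x = n" and y: "length y = n" and prefix: "prefix (sfeg p n x) (sfeg p n y)"
  shows "x = y"
proof (rule ccontr)
  assume "x \<noteq> y"
  define mx my where "mx = gray_midpoint n (gray_rank x)" and "my = gray_midpoint n (gray_rank y)"
  obtain w where w: "sfeg p n y = sfeg p n x @ w"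
    using prefix by (rule prefixE)
  then have "ell_s p x \<le> ell_s p y"
    by (metis le_add1 length_append length_sfeg)
  then have "bin_digits my (ell_s p x) = take (ell_s p x) (sfeg p n y)"
    using y by (simp add: my_def sfeg_eq_bin_digits_gray_midpoint take_bin_digits)
  also have "\<dots> = bin_digits mx (ell_s p x)"
    using x w by (simp add: mx_def sfeg_eq_bin_digits_gray_midpoint)
  finally have "bin_digits my (ell_s p x) = bin_digits mx (ell_s p x)" .
  moreover have "0 \<le> mx" "mx < 1" "0 \<le> my" "my < 1"
    using x y gray_rank_less[of x] gray_rank_less[of y]
    unfolding mx_def my_def by (simp_all add: gray_midpoint_bounds)
  ultimately have close: "\<bar>my - mx\<bar> * 2 ^ ell_s p x < 1"
    by (intro dist_less_if_bin_digits_eq)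
  let ?a = "alpha_s p * seqprob p x"
  have "1 = ?a / 2 * (2 / ?a)"
    using alpha_s_bounds seqprob_bounds[of x] by simp
  also have "\<dots> \<le> \<bar>my - mx\<bar> * 2 ^ ell_s p x"
    using gray_midpoint_gap[OF x y \<open>x \<noteq> y\<close>] inverse_le_power_ceiling_log alpha_seqprob_bounds[of x]
    unfolding mx_def my_def ell_s_def by (intro mult_mono) auto
  finally show False
    using close by simp
qed

lemma ell_s_less: "real (ell_s p x) < 2 - log 2 (alpha_s p) - log 2 (seqprob p x)"
proof -
  have "real (ell_s p x) < - log 2 (alpha_s p * seqprob p x) + 2"
    using ell_s_eq[of x] by linarith
  then show ?thesis
    using alpha_s_bounds seqprob_bounds[of x] by (simp add: log_mult)
qed

lemma expected_length_sfeg_less: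
  "(\<Sum>x\<in>{x. length x = n}. seqprob p x * real (length (sfeg p n x)))
    < real n * entropy2 p + 2 - log 2 (alpha_s p)"
proof -
  have "(\<Sum>x\<in>{x. length x = n}. seqprob p x * real (length (sfeg p n x)))
      < (\<Sum>x\<in>{x. length x = n}. seqprob p x * (2 - log 2 (alpha_s p) - log 2 (seqprob p x)))"
  proof (rule sum_strict_mono)
    show "finite {x :: bool list. length x = n}"
      by (rule finite_bool_lists_length)
    show "{x :: bool list. length x = n} \<noteq> {}"
      by (metis (mono_tags) empty_iff length_replicate mem_Collect_eq)
  qed (simp add: seqprob_bounds ell_s_less)
  also have "\<dots> = (2 - log 2 (alpha_s p)) * (\<Sum>x\<in>{x. length x = n}. seqprob p x)
      - (\<Sum>x\<in>{x. length x = n}. seqprob p x * log 2 (seqprob p x))"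
    by (simp add: sum_distrib_left sum_subtractf sum.distrib algebra_simps)
  also have "\<dots> = real n * entropy2 p + 2 - log 2 (alpha_s p)"
    by (simp add: sum_seqprob_lists_length sum_seqprob_log_lists_length pos sum_eq_1)
  finally show ?thesis .
qed

end

theorem theorem1:
  fixes p :: "bool \<Rightarrow> real" and n :: nat
  assumes "0 < p False" and "0 < p True" and "p False + p True = 1"
    and "p False \<noteq> p True"
  shows "uniquely_decodable n (sfeg p n) \<and>
    (\<Sum>x\<in>{x. length x = n}. seqprob p x * real (length (sfeg p n x)))
      < real n * entropy2 p + 2 - log 2 ((1 + rho p) / rho p)"
proof -
  interpret binary_source p
  proof
    show "0 < p b" for b
      using assms(1,2) by (cases b) simp_all
  qed (use assms(3,4) in simp_all)
  have "uniquely_decodable n (sfeg p n)"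
    by (rule uniquely_decodable_if_prefix_free)
      (simp_all add: ell_s_pos sfeg_prefix_free flip: length_greater_0_conv)
  with expected_length_sfeg_less show ?thesis
    by (simp add: alpha_s_def)
qed

end
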